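(* Let $\Sigma\subset\mathbb{CH}^{n+1}$ be an $m$-dimensional submanifold that is $C^1$-asymptotically regular. If $m\ge2$ and $\Sigma$ is isotropic (i.e. the Kähler form $\omega_{\mathbb{CH}}(X,Y)=g_{\mathbb{CH}}(X,J_{\mathbb{CH}}Y)$ vanishes on $T\Sigma$), then $\Sigma$ is asymptotically horizontal.
   Context: Identify $\mathbb R^{2n+2}$ with $\mathbb C^{n+1}$ via $z_j=x_j+iy_j$; $r=|z|$; $\theta=r^{-2}\sum_j(x_jdy_j-y_jdx_j)$ on $\mathbb R^{2n+2}\setminus\{0\}$; $\mathbb B^{2n+2}$ the open unit ball, $\mathbb S^{2n+1}$ its boundary, $\hat\theta$ the pullback of $\theta$ to $\mathbb S^{2n+1}$; a submanifold $\Gamma\subset\mathbb S^{2n+1}$ is horizontal if $T_q\Gamma\subset\ker\hat\theta_q$ for all $q\in\Gamma$. $\mathbb{CH}^{n+1}$ is complex hyperbolic space (complete simply connected Kähler manifold of real dimension $2n+2$ with constant holomorphic sectional curvature, sectional curvatures in $[-4,-1]$), metric $g_{\mathbb{CH}}$, complex structure $J_{\mathbb{CH}}$. Bergman model: $\mathbb B^{2n+2}$ with $g_B=\frac{1}{1-r^2}\sum_jdz_jd\bar z_j+\frac{1}{(1-r^2)^2}\sum_{j,k}z_j\bar z_kdz_kd\bar z_j$ and the standard complex structure. For $p\in\mathbb{CH}^{n+1}$, $\Upsilon_p:\mathbb{CH}^{n+1}\to(\mathbb B^{2n+2},g_B)$ is an isometric biholomorphism with $\Upsilon_p(p)=0$,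 and $\Sigma_p=\overline{\Upsilon_p(\Sigma)}\subset\bar{\mathbb B}^{2n+2}$. $\Sigma$ is $C^l$-asymptotically regular if $\Sigma_p$ is a $C^l$ submanifold with boundary meeting $\partial\mathbb B^{2n+2}$ transversally; it is asymptotically horizontal if moreover $\partial\Sigma_p$ is a horizontal submanifold of $\mathbb S^{2n+1}$ (independent of choices). *)

theory Defs
  imports "HOL-Analysis.Analysis"
begin

text \<open>Model: complex hyperbolic space CH^{n+1} is taken in its Bergman model, the open unit
ball of complex^'n (CARD('n) = n+1), with the Bergman metric and the standard complex
structure (multiplication by i).  complex^'n is regarded as the real Euclidean space R^{2n+2}.\<close>

definition bergman_g :: "complex^'n \<Rightarrow> complex^'n \<Rightarrow> complex^'n \<Rightarrow> real" where
  "bergman_g z v w =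
     Re ((\<Sum>j\<in>UNIV. v$j * cnj (w$j)) / complex_of_real (1 - (norm z)^2)
       + (\<Sum>j\<in>UNIV. v$j * cnj (z$j)) * (\<Sum>k\<in>UNIV. z$k * cnj (w$k))
           / complex_of_real ((1 - (norm z)^2)^2))"

definition kaehler_form :: "complex^'n \<Rightarrow> complex^'n \<Rightarrow> complex^'n \<Rightarrow> real" where
  "kaehler_form z X Y = bergman_g z X (\<i> *s Y)"

text \<open>Isometric biholomorphisms of the Bergman ball (the maps Upsilon_p, p = inverse image of 0).\<close>
definition bergman_isom_biholo :: "(complex^'n \<Rightarrow> complex^'n) \<Rightarrow> bool" where
  "bergman_isom_biholo F \<longleftrightarrow>
     bij_betw F (ball 0 1) (ball 0 1) \<and>
     (\<forall>z\<in>ball 0 1. F differentiable (at z) \<and>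
        (\<forall>v. frechet_derivative F (at z) (\<i> *s v) = \<i> *s frechet_derivative F (at z) v) \<and>
        (\<forall>v w. bergman_g (F z) (frechet_derivative F (at z) v) (frechet_derivative F (at z) w)
               = bergman_g z v w))"

definition tangent_space :: "'e::real_normed_vector set \<Rightarrow> 'e \<Rightarrow> 'e set" where
  "tangent_space S q = {v. \<exists>\<gamma> e. 0 < e \<and> \<gamma> 0 = q \<and> (\<forall>t. \<bar>t\<bar> < e \<longrightarrow> \<gamma> t \<in> S) \<and>
                              (\<gamma> has_vector_derivative v) (at 0)}"

definition C1_chart :: "'e::euclidean_space set \<Rightarrow> (real^'m \<Rightarrow> 'e) \<Rightarrow> (real^'m \<Rightarrow> ((real^'m) \<Rightarrow>\<^sub>L 'e))
                        \<Rightarrow> (real^'m) set \<Rightarrow> bool" where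
  "C1_chart M \<phi> \<phi>' D \<longleftrightarrow>
     (\<exists>W. open W \<and> D \<subseteq> W \<and> (\<forall>u\<in>W. (\<phi> has_derivative blinfun_apply (\<phi>' u)) (at u)) \<and>
          continuous_on W \<phi>') \<and>
     (\<forall>u\<in>D. inj (blinfun_apply (\<phi>' u))) \<and>
     inj_on \<phi> D \<and> continuous_on (\<phi> ` D) (inv_into D \<phi>) \<and>
     (\<exists>V. open V \<and> \<phi> ` D = M \<inter> V)"

definition C1_submanifold :: "'m::finite itself \<Rightarrow> 'e::euclidean_space set \<Rightarrow> bool" where
  "C1_submanifold _ M \<longleftrightarrow>
     (\<forall>q\<in>M. \<exists>(\<phi>::real^'m \<Rightarrow> 'e) \<phi>' D. open D \<and> C1_chart M \<phi> \<phi>' D \<and> q \<in> \<phi> ` D)"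

definition bd_chart :: "'e::euclidean_space set \<Rightarrow> (real^'m \<Rightarrow> 'e) \<Rightarrow> (real^'m \<Rightarrow> ((real^'m) \<Rightarrow>\<^sub>L 'e))
                        \<Rightarrow> (real^'m) set \<Rightarrow> 'm \<Rightarrow> bool" where
  "bd_chart M \<phi> \<phi>' D k \<longleftrightarrow> (\<exists>U. open U \<and> D = U \<inter> {u. 0 \<le> u$k}) \<and> C1_chart M \<phi> \<phi>' D"

definition C1_bd_submanifold :: "'m::finite itself \<Rightarrow> 'e::euclidean_space set \<Rightarrow> bool" where
  "C1_bd_submanifold _ M \<longleftrightarrow>
     (\<forall>q\<in>M. \<exists>(\<phi>::real^'m \<Rightarrow> 'e) \<phi>' D k. bd_chart M \<phi> \<phi>' D k \<and> q \<in> \<phi> ` D)"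

definition manifold_boundary :: "'m::finite itself \<Rightarrow> 'e::euclidean_space set \<Rightarrow> 'e set" where
  "manifold_boundary _ M =
     {q. \<exists>(\<phi>::real^'m \<Rightarrow> 'e) \<phi>' D k u. bd_chart M \<phi> \<phi>' D k \<and> u \<in> D \<and> u$k = 0 \<and> \<phi> u = q}"

definition compactified :: "(complex^'n \<Rightarrow> complex^'n) \<Rightarrow> (complex^'n) set \<Rightarrow> (complex^'n) set" where
  "compactified F \<Sigma> = closure (F ` \<Sigma>)"

text \<open>C^1 asymptotic regularity w.r.t. a given choice of Upsilon: Sigma_p is a C^1
  submanifold with boundary, its boundary is Sigma_p \<inter> S^{2n+1}, and it meets the sphere
  transversally (the tangent space is not contained in the tangent hyperplane of the sphere).\<close>
definition asymp_regular_via :: "'m::finite itself \<Rightarrow> (complex^'n \<Rightarrow> complex^'n) \<Rightarrow> (complex^'n) set \<Rightarrow> bool" where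
  "asymp_regular_via mm F \<Sigma> \<longleftrightarrow>
     (let S = compactified F \<Sigma> in
       C1_bd_submanifold mm S \<and>
       manifold_boundary mm S = S \<inter> sphere 0 1 \<and>
       (\<forall>(\<phi>::real^'m \<Rightarrow> complex^'n) \<phi>' D k u.
          bd_chart S \<phi> \<phi>' D k \<and> u \<in> D \<and> \<phi> u \<in> sphere 0 1 \<longrightarrow>
          (\<exists>w. blinfun_apply (\<phi>' u) w \<bullet> \<phi> u \<noteq> 0)))"

definition asymptotically_regular :: "'m::finite itself \<Rightarrow> (complex^'n) set \<Rightarrow> bool" where
  "asymptotically_regular mm \<Sigma> \<longleftrightarrow> (\<exists>F. bergman_isom_biholo F \<and> asymp_regular_via mm F \<Sigma>)"

definition theta :: "complex^'n \<Rightarrow> complex^'n \<Rightarrow> real" where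
  "theta z v = (\<Sum>j\<in>UNIV. Re (z$j) * Im (v$j) - Im (z$j) * Re (v$j)) / (norm z)^2"

definition horizontal :: "(complex^'n) set \<Rightarrow> bool" where
  "horizontal \<Gamma> \<longleftrightarrow> \<Gamma> \<subseteq> sphere 0 1 \<and> (\<forall>q\<in>\<Gamma>. \<forall>v\<in>tangent_space \<Gamma> q. theta q v = 0)"

definition asymptotically_horizontal :: "'m::finite itself \<Rightarrow> (complex^'n) set \<Rightarrow> bool" where
  "asymptotically_horizontal mm \<Sigma> \<longleftrightarrow>
     (\<exists>F. bergman_isom_biholo F \<and> asymp_regular_via mm F \<Sigma> \<and>
          horizontal (manifold_boundary mm (compactified F \<Sigma>)))"

definition isotropic :: "(complex^'n) set \<Rightarrow> bool" where
  "isotropic \<Sigma> \<longleftrightarrow>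
     (\<forall>q\<in>\<Sigma>. \<forall>X\<in>tangent_space \<Sigma> q. \<forall>Y\<in>tangent_space \<Sigma> q. kaehler_form q X Y = 0)"

end

theory Submission
  imports Defs
begin

text \<open>With \<open>h(v, w) = \<Sum>\<^sub>j v\<^sub>j cnj w\<^sub>j\<close>, the rescaled Kaehler form \<open>(1 - |z|^2)^2 \<omega>\<^sub>z(X, Y)\<close> is
  continuous on the closed ball and equals \<open>Im h(X, q) (Y \<bullet> q) - (X \<bullet> q) Im h(Y, q)\<close> for \<open>|q| = 1\<close>.
  Isotropy is preserved by the holomorphic isometry \<open>\<Upsilon>\<^sub>p\<close>, so the rescaled form vanishes on
  chart derivatives of \<open>\<Sigma>\<^sub>p\<close> at interior points, hence by continuity also at a boundary point
  \<open>q\<close>. A vector \<open>v\<close> tangent to \<open>\<partial>\<Sigma>\<^sub>p\<close> satisfies \<open>v \<bullet> q = 0\<close>, and transversality provides a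
  tangent vector \<open>w\<close> of \<open>\<Sigma>\<^sub>p\<close> with \<open>w \<bullet> q \<noteq> 0\<close>; thus \<open>0 = Im h(v, q) (w \<bullet> q)\<close> forces
  \<open>\<theta>\<^sub>q(v) = Im h(v, q) = 0\<close>.\<close>

definition herm :: "complex^'n \<Rightarrow> complex^'n \<Rightarrow> complex" where
  "herm v w = (\<Sum>j\<in>UNIV. v$j * cnj (w$j))"

lemma Re_herm [simp]: "Re (herm v w) = v \<bullet> w"
  unfolding herm_def inner_vec_def inner_complex_def by simp

lemma herm_commute: "herm w v = cnj (herm v w)"
  unfolding herm_def by (simp add: mult.commute)

lemma herm_mult_ii_right: "herm X (\<i> *s Y) = - \<i> * herm X Y"
  unfolding herm_def by (simp add: sum_distrib_left algebra_simps)

lemma theta_eq_Im_herm: "norm q = 1 \<Longrightarrow> theta q v = Im (herm v q)"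
  unfolding theta_def herm_def by (simp add: algebra_simps)

lemma bergman_g_herm:
  "bergman_g z v w = Re (herm v w) / (1 - (norm z)^2) + Re (herm v z * herm z w) / (1 - (norm z)^2)^2"
  unfolding bergman_g_def herm_def by (simp add: Re_divide_of_real)

lemma bergman_g_pos:
  assumes "norm z < 1" "v \<noteq> 0"
  shows "0 < bergman_g z v v"
proof -
  have "(norm z)^2 < 1" using assms(1) by (simp add: power_less_one_iff)
  then have "0 < Re (herm v v) / (1 - (norm z)^2)" using assms(2) by simp
  moreover have "0 \<le> Re (herm v z * herm z v) / (1 - (norm z)^2)^2"
    unfolding herm_commute[of z v] complex_mult_cnj by simp
  ultimately show ?thesis unfolding bergman_g_herm by (rule add_pos_nonneg)
qed

definition scaled_kaehler_form :: "complex^'n \<Rightarrow> complex^'n \<Rightarrow> complex^'n \<Rightarrow> real" where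
  "scaled_kaehler_form z X Y =
     (1 - (norm z)^2) * Re (herm X (\<i> *s Y)) + Re (herm X z * herm z (\<i> *s Y))"

lemma kaehler_form_eq_scaled:
  assumes "norm z \<noteq> 1"
  shows "kaehler_form z X Y = scaled_kaehler_form z X Y / (1 - (norm z)^2)^2"
proof -
  define r where "r = 1 - (norm z)^2"
  have "r \<noteq> 0" using assms unfolding r_def by (smt (verit) norm_ge_zero power2_eq_1_iff)
  then have "A / r + B / r^2 = (r * A + B) / r^2" for A B :: real
    by (simp add: field_simps power2_eq_square)
  then show ?thesis
    unfolding kaehler_form_def bergman_g_herm scaled_kaehler_form_def r_def .
qed

lemma scaled_kaehler_form_sphere:
  "norm q = 1 \<Longrightarrow> scaled_kaehler_form q X Y = Im (herm X q) * (Y \<bullet> q) - (X \<bullet> q) * Im (herm Y q)"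
  unfolding scaled_kaehler_form_def by (simp add: herm_mult_ii_right herm_commute[of q Y])

lemma tendsto_scaled_kaehler_form:
  assumes "(z \<longlongrightarrow> z0) F" "(X \<longlongrightarrow> X0) F" "(Y \<longlongrightarrow> Y0) F"
  shows "((\<lambda>n. scaled_kaehler_form (z n) (X n) (Y n)) \<longlongrightarrow> scaled_kaehler_form z0 X0 Y0) F"
  unfolding scaled_kaehler_form_def herm_mult_ii_right unfolding herm_def
  by (intro tendsto_intros assms)

lemma tangent_space_mono: "A \<subseteq> B \<Longrightarrow> tangent_space A q \<subseteq> tangent_space B q"
  unfolding tangent_space_def by blast

lemma tangent_space_open:
  fixes x c :: "'a::real_normed_vector"
  assumes "open D" "x \<in> D"
  shows "c \<in> tangent_space D x"
proof -
  obtain r where r: "0 < r" "ball x r \<subseteq> D" using assms open_contains_ball by blast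
  define e where "e = r / (norm c + 1)"
  have "x + t *\<^sub>R c \<in> D" if "\<bar>t\<bar> < e" for t
  proof -
    have "norm (t *\<^sub>R c) \<le> \<bar>t\<bar> * (norm c + 1)" by (simp add: mult_left_mono)
    also have "\<dots> < r" using that r(1) by (simp add: e_def pos_less_divide_eq add_nonneg_pos)
    finally show ?thesis using r(2) by (auto simp: dist_norm)
  qed
  moreover have "((\<lambda>t. x + t *\<^sub>R c) has_vector_derivative c) (at 0)"
    by (auto intro!: derivative_eq_intros)
  moreover have "0 < e" using r(1) by (simp add: e_def add_nonneg_pos)
  ultimately show ?thesis unfolding tangent_space_def
    by (intro CollectI exI[of _ "\<lambda>t. x + t *\<^sub>R c"] exI[of _ e]) auto
qed

lemma tangent_space_image:
  assumes "(F has_derivative dF) (at p)" "v \<in> tangent_space A p"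
  shows "dF v \<in> tangent_space (F ` A) (F p)"
proof -
  obtain \<gamma> e where \<gamma>: "0 < e" "\<gamma> 0 = p" "\<forall>t. \<bar>t\<bar> < e \<longrightarrow> \<gamma> t \<in> A"
    "(\<gamma> has_vector_derivative v) (at 0)"
    using assms(2) unfolding tangent_space_def by blast
  have "((F \<circ> \<gamma>) has_derivative dF \<circ> (\<lambda>h. h *\<^sub>R v)) (at 0)"
    using diff_chain_at \<gamma>(2,4) assms(1) unfolding has_vector_derivative_def by blast
  moreover have "dF \<circ> (\<lambda>h. h *\<^sub>R v) = (\<lambda>h. h *\<^sub>R dF v)"
    using has_derivative_linear[OF assms(1)] by (auto simp: linear_scale)
  ultimately have "((F \<circ> \<gamma>) has_vector_derivative dF v) (at 0)"
    unfolding has_vector_derivative_def by simp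
  then show ?thesis unfolding tangent_space_def using \<gamma>(1-3)
    by (intro CollectI exI[of _ "F \<circ> \<gamma>"] exI[of _ e]) auto
qed

lemma tangent_space_sphere_orthogonal:
  fixes v :: "'a::real_inner"
  assumes "A \<subseteq> sphere 0 1" "v \<in> tangent_space A q"
  shows "v \<bullet> q = 0"
proof -
  obtain \<gamma> e where \<gamma>: "0 < e" "\<gamma> 0 = q" "\<forall>t. \<bar>t\<bar> < e \<longrightarrow> \<gamma> t \<in> A"
    "(\<gamma> has_vector_derivative v) (at 0)"
    using assms(2) unfolding tangent_space_def by blast
  have "((\<lambda>t. \<gamma> t \<bullet> \<gamma> t) has_derivative (\<lambda>h. \<gamma> 0 \<bullet> (h *\<^sub>R v) + (h *\<^sub>R v) \<bullet> \<gamma> 0)) (at 0)"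
    using has_derivative_inner[OF \<gamma>(4)[unfolded has_vector_derivative_def] \<gamma>(4)[unfolded has_vector_derivative_def]] .
  moreover have "((\<lambda>t. \<gamma> t \<bullet> \<gamma> t) has_derivative (\<lambda>h. 0)) (at 0)"
  proof (rule has_derivative_transform_within_open[of "\<lambda>t. 1" _ _ _ "ball 0 e"])
    show "1 = \<gamma> t \<bullet> \<gamma> t" if "t \<in> ball 0 e" for t
      using that \<gamma>(3) assms(1) by (auto simp: dot_square_norm)
  qed (use \<gamma>(1) in auto)
  ultimately have "(\<lambda>h. \<gamma> 0 \<bullet> (h *\<^sub>R v) + (h *\<^sub>R v) \<bullet> \<gamma> 0) = (\<lambda>h. 0)"
    by (rule has_derivative_unique)
  from fun_cong[OF this, of 1] show ?thesis using \<gamma>(2) by (simp add: inner_commute)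
qed

lemma has_derivative_remainder_tendsto:
  assumes "(f has_derivative L) (at x)" "(y \<longlongrightarrow> x) F"
  shows "((\<lambda>t. norm (f (y t) - f x - L (y t - x)) / norm (y t - x)) \<longlongrightarrow> 0) F"
proof -
  let ?\<rho> = "\<lambda>z. norm (f z - f x - L (z - x)) / norm (z - x)"
  have "(?\<rho> \<longlongrightarrow> 0) (at x)" using assms(1) has_derivative_iff_norm by blast
  \<comment> \<open>\<open>?\<rho> x = 0 / 0 = 0\<close>, so \<open>?\<rho>\<close> is continuous at \<open>x\<close> even though \<open>y t = x\<close> is allowed.\<close>
  then have "isCont ?\<rho> x" by (simp add: continuous_at)
  from isCont_tendsto_compose[OF this assms(2)] show ?thesis by simp
qed

lemma immersion_lift_Lipschitz:
  fixes \<phi> :: "'a::euclidean_space \<Rightarrow> 'b::euclidean_space" and \<gamma> :: "real \<Rightarrow> 'b"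
  assumes \<phi>: "(\<phi> has_derivative L) (at u)" and "inj L"
    and \<psi>: "(\<psi> \<longlongrightarrow> u) (at 0)" and lift: "\<forall>\<^sub>F t in at 0. \<phi> (\<psi> t) = \<gamma> t"
    and "\<gamma> 0 = \<phi> u" and \<gamma>: "(\<gamma> has_vector_derivative v) (at 0)"
  shows "\<exists>M. \<forall>\<^sub>F t in at 0. norm (\<psi> t - u) \<le> M * \<bar>t\<bar>"
proof -
  have lin: "linear L" using \<phi> has_derivative_linear by blast
  obtain c where c: "0 < c" "\<And>x. c * norm x \<le> norm (L x)"
    using linear_inj_bounded_below_pos[OF lin \<open>inj L\<close>] by blast
  let ?\<rho> = "\<lambda>t. norm (\<phi> (\<psi> t) - \<phi> u - L (\<psi> t - u)) / norm (\<psi> t - u)"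
  have "\<forall>\<^sub>F t in at 0. ?\<rho> t < c / 2"
    using has_derivative_remainder_tendsto[OF \<phi> \<psi>] c(1) by (intro order_tendstoD(2)) auto
  moreover have "\<forall>\<^sub>F t in at 0. norm (\<gamma> t - \<gamma> 0 - t *\<^sub>R v) \<le> 1 * \<bar>t\<bar>"
    using \<gamma> unfolding has_vector_derivative_def has_derivative_within_alt2
    by (auto dest!: spec[where x=1])
  ultimately have "\<forall>\<^sub>F t in at 0. norm (\<psi> t - u) \<le> (2 * (norm v + 1) / c) * \<bar>t\<bar>"
    using lift
  proof eventually_elim
    case (elim t)
    have "L (\<psi> t - u) = (\<gamma> t - \<gamma> 0) - (\<phi> (\<psi> t) - \<phi> u - L (\<psi> t - u))"
      using elim(3) \<open>\<gamma> 0 = \<phi> u\<close> by simp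
    moreover have "?\<rho> t * norm (\<psi> t - u) = norm (\<phi> (\<psi> t) - \<phi> u - L (\<psi> t - u))"
      by (cases "\<psi> t = u") (simp_all add: linear_0[OF lin])
    ultimately have "norm (L (\<psi> t - u)) \<le> norm (\<gamma> t - \<gamma> 0) + ?\<rho> t * norm (\<psi> t - u)"
      using norm_triangle_ineq4 by metis
    moreover have "norm (\<gamma> t - \<gamma> 0) \<le> (norm v + 1) * \<bar>t\<bar>"
      using elim(2) norm_triangle_ineq2[of "\<gamma> t - \<gamma> 0" "t *\<^sub>R v"] by (simp add: algebra_simps)
    moreover have "?\<rho> t * norm (\<psi> t - u) \<le> c / 2 * norm (\<psi> t - u)"
      using elim(1) by (intro mult_right_mono) auto
    ultimately have "c / 2 * norm (\<psi> t - u) \<le> (norm v + 1) * \<bar>t\<bar>"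
      using c(2)[of "\<psi> t - u"] by linarith
    then show ?case using c(1) by (simp add: field_simps)
  qed
  then show ?thesis by blast
qed

lemma immersion_lift_velocity_in_range:
  fixes \<phi> :: "'a::euclidean_space \<Rightarrow> 'b::euclidean_space" and \<gamma> :: "real \<Rightarrow> 'b"
  assumes \<phi>: "(\<phi> has_derivative L) (at u)" and "inj L"
    and \<psi>: "(\<psi> \<longlongrightarrow> u) (at 0)" and lift: "\<forall>\<^sub>F t in at 0. \<phi> (\<psi> t) = \<gamma> t"
    and "\<gamma> 0 = \<phi> u" and \<gamma>: "(\<gamma> has_vector_derivative v) (at 0)"
  shows "v \<in> range L"
proof -
  have lin: "linear L" using \<phi> has_derivative_linear by blast
  obtain M where M: "\<forall>\<^sub>F t in at 0. norm (\<psi> t - u) \<le> M * \<bar>t\<bar>"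
    using immersion_lift_Lipschitz[OF assms] by blast
  let ?\<rho> = "\<lambda>t. norm (\<phi> (\<psi> t) - \<phi> u - L (\<psi> t - u)) / norm (\<psi> t - u)"
  let ?q = "\<lambda>t. norm (\<gamma> t - \<gamma> 0 - t *\<^sub>R v) / \<bar>t\<bar>"
  have "(?q \<longlongrightarrow> 0) (at 0)"
    using \<gamma> unfolding has_vector_derivative_def has_derivative_iff_norm by simp
  then have "((\<lambda>t. ?q t + M * ?\<rho> t) \<longlongrightarrow> 0) (at 0)"
    using tendsto_add[OF _ tendsto_mult_right_zero[OF has_derivative_remainder_tendsto[OF \<phi> \<psi>]]]
    by simp
  moreover have "\<forall>\<^sub>F t in at 0. norm (L ((1 / t) *\<^sub>R (\<psi> t - u)) - v) \<le> ?q t + M * ?\<rho> t"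
    using M lift eventually_neq_at_within[of 0 0 UNIV]
  proof eventually_elim
    case (elim t)
    have "L ((1 / t) *\<^sub>R (\<psi> t - u)) - v
        = (1 / t) *\<^sub>R ((\<gamma> t - \<gamma> 0 - t *\<^sub>R v) - (\<phi> (\<psi> t) - \<phi> u - L (\<psi> t - u)))"
      using elim \<open>\<gamma> 0 = \<phi> u\<close> by (simp only: linear_scale[OF lin]) (simp add: algebra_simps)
    also have "norm \<dots> \<le> (norm (\<gamma> t - \<gamma> 0 - t *\<^sub>R v) + ?\<rho> t * norm (\<psi> t - u)) / \<bar>t\<bar>"
      by (simp add: divide_right_mono norm_triangle_ineq4 linear_0[OF lin])
    also have "\<dots> \<le> (norm (\<gamma> t - \<gamma> 0 - t *\<^sub>R v) + ?\<rho> t * (M * \<bar>t\<bar>)) / \<bar>t\<bar>"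
      using elim(1) by (intro divide_right_mono add_left_mono mult_left_mono) auto
    also have "\<dots> = ?q t + M * ?\<rho> t"
      using elim(3) by (simp add: field_simps)
    finally show ?case by simp
  qed
  ultimately have "((\<lambda>t. L ((1 / t) *\<^sub>R (\<psi> t - u)) - v) \<longlongrightarrow> 0) (at 0)"
    by (rule Lim_null_comparison[rotated])
  then have "((\<lambda>t. L ((1 / t) *\<^sub>R (\<psi> t - u))) \<longlongrightarrow> v) (at 0)"
    by (rule LIM_zero_cancel)
  moreover have "closed (range L)"
    by (rule closed_subspace) (simp add: lin linear_subspace_image)
  ultimately show ?thesis by (rule Lim_in_closed_set[rotated -1]) auto
qed

lemma C1_chart_derivative:
  assumes "C1_chart M \<phi> \<phi>' D" "u \<in> D"
  shows "(\<phi> has_derivative \<phi>' u) (at u)" "inj (\<phi>' u)"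
  using assms unfolding C1_chart_def by blast+

lemma chart_derivative_in_tangent_space:
  assumes "C1_chart M \<psi> \<psi>' D" "open D" "v \<in> D"
  shows "\<psi>' v c \<in> tangent_space M (\<psi> v)"
proof -
  have "\<psi>' v c \<in> tangent_space (\<psi> ` D) (\<psi> v)"
    using tangent_space_image[OF C1_chart_derivative(1)[OF assms(1,3)] tangent_space_open[OF assms(2,3)]] .
  moreover have "\<psi> ` D \<subseteq> M" using assms(1) unfolding C1_chart_def by blast
  ultimately show ?thesis using tangent_space_mono by blast
qed

lemma chart_inverse_tendsto:
  assumes \<phi>: "C1_chart S \<phi> \<phi>' D" and "u \<in> D"
    and y: "(y \<longlongrightarrow> \<phi> u) F" "\<forall>\<^sub>F n in F. y n \<in> S"
  shows "\<forall>\<^sub>F n in F. y n \<in> \<phi> ` D" "((\<lambda>n. inv_into D \<phi> (y n)) \<longlongrightarrow> u) F"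
proof -
  obtain V where V: "open V" "\<phi> ` D = S \<inter> V" using \<phi> unfolding C1_chart_def by blast
  have "\<forall>\<^sub>F n in F. y n \<in> V"
    using topological_tendstoD[OF y(1) V(1)] V(2) \<open>u \<in> D\<close> by blast
  with y(2) show in_image: "\<forall>\<^sub>F n in F. y n \<in> \<phi> ` D"
    by eventually_elim (use V(2) in blast)
  have "continuous (at (\<phi> u) within \<phi> ` D) (inv_into D \<phi>)"
    using \<phi> \<open>u \<in> D\<close> unfolding C1_chart_def by (meson continuous_on_eq_continuous_within imageI)
  moreover have "inv_into D \<phi> (\<phi> u) = u"
    using \<phi> \<open>u \<in> D\<close> unfolding C1_chart_def by (simp add: inv_into_f_f)
  ultimately show "((\<lambda>n. inv_into D \<phi> (y n)) \<longlongrightarrow> u) F"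
    using continuous_within_tendsto_compose[OF _ in_image y(1)] by metis
qed

lemma chart_tangent_space_subset_range:
  fixes \<phi> :: "real^'m \<Rightarrow> 'e::euclidean_space"
  assumes \<phi>: "C1_chart S \<phi> \<phi>' D" and "u \<in> D"
  shows "tangent_space S (\<phi> u) \<subseteq> range (\<phi>' u)"
proof
  fix v assume "v \<in> tangent_space S (\<phi> u)"
  then obtain \<gamma> e where \<gamma>: "0 < e" "\<gamma> 0 = \<phi> u" "\<forall>t. \<bar>t\<bar> < e \<longrightarrow> \<gamma> t \<in> S"
    "(\<gamma> has_vector_derivative v) (at 0)"
    unfolding tangent_space_def by blast
  have \<gamma>_lim: "(\<gamma> \<longlongrightarrow> \<phi> u) (at 0)"
    using has_vector_derivative_continuous[OF \<gamma>(4)] \<gamma>(2) by (simp add: continuous_at)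
  have "\<forall>\<^sub>F t in at (0::real). \<bar>t\<bar> < e"
    using \<gamma>(1) by (auto simp: eventually_at intro!: exI[of _ e])
  then have "\<forall>\<^sub>F t in at 0. \<gamma> t \<in> S"
    by eventually_elim (use \<gamma>(3) in blast)
  note lift = chart_inverse_tendsto[OF \<phi> \<open>u \<in> D\<close> \<gamma>_lim this]
  have "\<forall>\<^sub>F t in at 0. \<phi> (inv_into D \<phi> (\<gamma> t)) = \<gamma> t"
    using lift(1) by eventually_elim (simp add: f_inv_into_f)
  then show "v \<in> range (\<phi>' u)"
    using immersion_lift_velocity_in_range[OF C1_chart_derivative[OF \<phi> \<open>u \<in> D\<close>] lift(2)] \<gamma>(2,4)
    by simp
qed

lemma range_eq_if_subset_inj:
  fixes L L' :: "'a::euclidean_space \<Rightarrow> 'b::euclidean_space"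
  assumes "linear L" "inj L" "linear L'" "inj L'" "range L \<subseteq> range L'"
  shows "range L = range L'"
proof (rule subspace_dim_equal)
  show "subspace (range L)" "subspace (range L')"
    using assms(1,3) by (simp_all add: linear_subspace_image)
  show "dim (range L') \<le> dim (range L)"
    using dim_image_eq[of L UNIV] dim_image_eq[of L' UNIV] assms(1-4)
    by (simp add: inj_on_def dim_UNIV)
qed (rule assms(5))

lemma bergman_isom_biholo_derivative:
  assumes F: "bergman_isom_biholo F" and "p \<in> ball 0 1"
  defines "dF \<equiv> frechet_derivative F (at p)"
  shows "(F has_derivative dF) (at p)" "inj dF"
    "kaehler_form (F p) (dF X) (dF Y) = kaehler_form p X Y"
proof -
  have diff: "F differentiable (at p)" and cx: "\<And>v. dF (\<i> *s v) = \<i> *s dF v"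
    and iso: "\<And>v w. bergman_g (F p) (dF v) (dF w) = bergman_g p v w"
    using assms unfolding bergman_isom_biholo_def dF_def by auto
  show dF: "(F has_derivative dF) (at p)"
    using diff unfolding dF_def by (rule frechet_derivative_works[THEN iffD1])
  show "inj dF"
  proof (rule linear_injective_0[OF has_derivative_linear[OF dF], THEN iffD2], intro allI impI)
    fix v assume "dF v = 0"
    then have "bergman_g p v v = 0" using iso[of v v] by (simp add: bergman_g_def)
    then show "v = 0" using bergman_g_pos[of p v] \<open>p \<in> ball 0 1\<close> by force
  qed
  show "kaehler_form (F p) (dF X) (dF Y) = kaehler_form p X Y"
    unfolding kaehler_form_def cx[symmetric] by (rule iso)
qed

text \<open>At points of \<open>\<Upsilon>\<^sub>p(\<Sigma>)\<close> the image of a chart derivative of \<open>\<Sigma>\<^sub>p\<close> is the pushforward of a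
  tangent space of \<open>\<Sigma>\<close>: the former contains the latter and both have dimension \<open>m\<close>.\<close>
lemma kaehler_form_chart_vanishes_on_image:
  fixes \<Sigma> :: "(complex^'n) set" and \<phi> :: "real^'m \<Rightarrow> complex^'n"
  assumes F: "bergman_isom_biholo F" and "\<Sigma> \<subseteq> ball 0 1"
    and \<Sigma>: "C1_submanifold TYPE('m) \<Sigma>" "isotropic \<Sigma>"
    and \<phi>: "C1_chart S \<phi> \<phi>' D" and "F ` \<Sigma> \<subseteq> S" and "u \<in> D" and "\<phi> u \<in> F ` \<Sigma>"
  shows "kaehler_form (\<phi> u) (\<phi>' u a) (\<phi>' u b) = 0"
proof -
  obtain p where p: "p \<in> \<Sigma>" "\<phi> u = F p" using \<open>\<phi> u \<in> F ` \<Sigma>\<close> by auto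
  obtain \<psi> :: "real^'m \<Rightarrow> complex^'n" and \<psi>' D' v
    where \<psi>: "open D'" "C1_chart \<Sigma> \<psi> \<psi>' D'" "v \<in> D'" "p = \<psi> v"
    using \<Sigma>(1) p(1) unfolding C1_submanifold_def by blast
  have "p \<in> ball 0 1" using p(1) \<open>\<Sigma> \<subseteq> ball 0 1\<close> by blast
  define dF where "dF = frechet_derivative F (at p)"
  note dF = bergman_isom_biholo_derivative[OF F \<open>p \<in> ball 0 1\<close>, folded dF_def]
  have tangent: "\<psi>' v c \<in> tangent_space \<Sigma> p" for c
    using chart_derivative_in_tangent_space[OF \<psi>(2,1,3)] \<psi>(4) by simp
  have "dF (\<psi>' v c) \<in> range (\<phi>' u)" for c
  proof -
    have "dF (\<psi>' v c) \<in> tangent_space (F ` \<Sigma>) (F p)"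
      by (rule tangent_space_image[OF dF(1) tangent])
    also have "\<dots> \<subseteq> tangent_space S (\<phi> u)"
      using p(2) tangent_space_mono[OF \<open>F ` \<Sigma> \<subseteq> S\<close>] by simp
    also have "\<dots> \<subseteq> range (\<phi>' u)"
      by (rule chart_tangent_space_subset_range[OF \<phi> \<open>u \<in> D\<close>])
    finally show ?thesis .
  qed
  then have "range (dF \<circ> \<psi>' v) \<subseteq> range (\<phi>' u)" by auto
  moreover have "linear (dF \<circ> \<psi>' v)" "inj (dF \<circ> \<psi>' v)"
    using C1_chart_derivative[OF \<psi>(2,3)] dF(1,2)
    by (simp_all add: linear_compose has_derivative_linear inj_compose)
  moreover have "linear (\<phi>' u)" "inj (\<phi>' u)"
    using C1_chart_derivative[OF \<phi> \<open>u \<in> D\<close>] by (simp_all add: has_derivative_linear)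
  ultimately have "range (dF \<circ> \<psi>' v) = range (\<phi>' u)"
    by (rule range_eq_if_subset_inj[rotated -1])
  then have "\<phi>' u a \<in> range (dF \<circ> \<psi>' v)" "\<phi>' u b \<in> range (dF \<circ> \<psi>' v)" by auto
  then obtain a' b' where "\<phi>' u a = dF (\<psi>' v a')" "\<phi>' u b = dF (\<psi>' v b')" by auto
  then have "kaehler_form (\<phi> u) (\<phi>' u a) (\<phi>' u b) = kaehler_form p (\<psi>' v a') (\<psi>' v b')"
    using p(2) dF(3) by simp
  also have "\<dots> = 0" using \<Sigma>(2) p(1) tangent unfolding isotropic_def by blast
  finally show ?thesis .
qed

lemma scaled_kaehler_form_chart_vanishes_on_closure:
  fixes \<Sigma> :: "(complex^'n) set" and \<phi> :: "real^'m \<Rightarrow> complex^'n"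
  assumes F: "bergman_isom_biholo F" and "\<Sigma> \<subseteq> ball 0 1"
    and \<Sigma>: "C1_submanifold TYPE('m) \<Sigma>" "isotropic \<Sigma>"
    and \<phi>: "C1_chart S \<phi> \<phi>' D" and "F ` \<Sigma> \<subseteq> S" and "u \<in> D" and "\<phi> u \<in> closure (F ` \<Sigma>)"
  shows "scaled_kaehler_form (\<phi> u) (\<phi>' u a) (\<phi>' u b) = 0"
proof -
  have "F ` \<Sigma> \<subseteq> ball 0 1"
    using F \<open>\<Sigma> \<subseteq> ball 0 1\<close> unfolding bergman_isom_biholo_def bij_betw_def by blast
  obtain y where y: "\<And>n. y n \<in> F ` \<Sigma>" "y \<longlonglongrightarrow> \<phi> u"
    using \<open>\<phi> u \<in> closure (F ` \<Sigma>)\<close> closure_sequential by blast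
  define x where "x n = inv_into D \<phi> (y n)" for n
  have "\<forall>\<^sub>F n in sequentially. y n \<in> S"
    using y(1) \<open>F ` \<Sigma> \<subseteq> S\<close> by (intro always_eventually) blast
  note lift = chart_inverse_tendsto[OF \<phi> \<open>u \<in> D\<close> y(2) this, folded x_def]
  obtain W where "open W" "D \<subseteq> W" "continuous_on W \<phi>'" using \<phi> unfolding C1_chart_def by blast
  then have "isCont \<phi>' u" using \<open>u \<in> D\<close> continuous_on_eq_continuous_at by blast
  then have "(\<lambda>n. \<phi>' (x n)) \<longlonglongrightarrow> \<phi>' u" using lift(2) isCont_tendsto_compose by blast
  then have "(\<lambda>n. \<phi>' (x n) c) \<longlonglongrightarrow> \<phi>' u c" for c
    by (rule bounded_bilinear.tendsto[OF bounded_bilinear_blinfun_apply _ tendsto_const])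
  then have "(\<lambda>n. scaled_kaehler_form (y n) (\<phi>' (x n) a) (\<phi>' (x n) b))
      \<longlonglongrightarrow> scaled_kaehler_form (\<phi> u) (\<phi>' u a) (\<phi>' u b)"
    by (intro tendsto_scaled_kaehler_form y(2))
  moreover have "\<forall>\<^sub>F n in sequentially. scaled_kaehler_form (y n) (\<phi>' (x n) a) (\<phi>' (x n) b) = 0"
    using lift(1)
  proof eventually_elim
    case (elim n)
    then have "x n \<in> D" "\<phi> (x n) = y n" unfolding x_def by (auto intro: inv_into_into f_inv_into_f)
    have "kaehler_form (\<phi> (x n)) (\<phi>' (x n) a) (\<phi>' (x n) b) = 0"
      using \<open>\<phi> (x n) = y n\<close> y(1)
      by (intro kaehler_form_chart_vanishes_on_image[OF F \<open>\<Sigma> \<subseteq> ball 0 1\<close> \<Sigma> \<phi> \<open>F ` \<Sigma> \<subseteq> S\<close> \<open>x n \<in> D\<close>]) simp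
    then have "kaehler_form (y n) (\<phi>' (x n) a) (\<phi>' (x n) b) = 0"
      using \<open>\<phi> (x n) = y n\<close> by simp
    moreover have "norm (y n) < 1" using \<open>F ` \<Sigma> \<subseteq> ball 0 1\<close> y(1)[of n] by auto
    moreover from this have "(norm (y n))^2 < 1" by (simp add: power_less_one_iff)
    ultimately show ?case using kaehler_form_eq_scaled[of "y n"] by simp
  qed
  ultimately have "(\<lambda>n. 0) \<longlonglongrightarrow> scaled_kaehler_form (\<phi> u) (\<phi>' u a) (\<phi>' u b)"
    by (rule Lim_transform_eventually)
  then show ?thesis by (simp add: LIMSEQ_const_iff)
qed

lemma boundary_tangent_theta_eq_0:
  fixes \<Sigma> :: "(complex^'n) set"
  assumes F: "bergman_isom_biholo F" and "\<Sigma> \<subseteq> ball 0 1"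
    and \<Sigma>: "C1_submanifold TYPE('m::finite) \<Sigma>" "isotropic \<Sigma>"
    and regular: "asymp_regular_via TYPE('m) F \<Sigma>"
    and q: "q \<in> manifold_boundary TYPE('m) (compactified F \<Sigma>)"
    and v: "v \<in> tangent_space (manifold_boundary TYPE('m) (compactified F \<Sigma>)) q"
  shows "theta q v = 0"
proof -
  define S where "S = compactified F \<Sigma>"
  have boundary: "manifold_boundary TYPE('m) S = S \<inter> sphere 0 1"
    and transversal: "\<And>(\<phi>::real^'m \<Rightarrow> complex^'n) \<phi>' D k u. bd_chart S \<phi> \<phi>' D k \<Longrightarrow> u \<in> D \<Longrightarrow>
      \<phi> u \<in> sphere 0 1 \<Longrightarrow> \<exists>w. \<phi>' u w \<bullet> \<phi> u \<noteq> 0"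
    using regular unfolding asymp_regular_via_def S_def Let_def by blast+
  obtain \<phi> :: "real^'m \<Rightarrow> complex^'n" and \<phi>' D k u
    where bd: "bd_chart S \<phi> \<phi>' D k" "u \<in> D" "\<phi> u = q"
    using q unfolding manifold_boundary_def S_def by blast
  have \<phi>: "C1_chart S \<phi> \<phi>' D" using bd(1) unfolding bd_chart_def by blast
  have "q \<in> S" "norm q = 1" using q boundary unfolding S_def by auto
  have "v \<bullet> q = 0"
    using tangent_space_sphere_orthogonal[of _ v q] v boundary unfolding S_def by blast
  have "v \<in> tangent_space S q"
    using v tangent_space_mono[of _ S] boundary unfolding S_def by blast
  then obtain a where a: "v = \<phi>' u a"
    using chart_tangent_space_subset_range[OF \<phi> bd(2)] bd(3) by blast
  obtain w where w: "\<phi>' u w \<bullet> q \<noteq> 0"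
    using transversal[OF bd(1,2)] bd(3) \<open>norm q = 1\<close> by auto
  have "F ` \<Sigma> \<subseteq> S" unfolding S_def compactified_def by (rule closure_subset)
  moreover have "\<phi> u \<in> closure (F ` \<Sigma>)" using \<open>q \<in> S\<close> bd(3) unfolding S_def compactified_def by simp
  ultimately have "scaled_kaehler_form q v (\<phi>' u w) = 0"
    using scaled_kaehler_form_chart_vanishes_on_closure[OF F \<open>\<Sigma> \<subseteq> ball 0 1\<close> \<Sigma> \<phi>] bd(2,3) a
    by blast
  then have "Im (herm v q) * (\<phi>' u w \<bullet> q) = 0"
    using scaled_kaehler_form_sphere[OF \<open>norm q = 1\<close>] \<open>v \<bullet> q = 0\<close> by simp
  then show ?thesis using w theta_eq_Im_herm[OF \<open>norm q = 1\<close>] by simp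
qed

theorem lemma3p2:
  fixes \<Sigma> :: "(complex^'n) set"
  assumes "\<Sigma> \<subseteq> ball 0 1"
    and "C1_submanifold TYPE('m::finite) \<Sigma>"
    and "asymptotically_regular TYPE('m) \<Sigma>"
    and "CARD('m) \<ge> 2"
    and "isotropic \<Sigma>"
  shows "asymptotically_horizontal TYPE('m) \<Sigma>"
proof -
  obtain F where F: "bergman_isom_biholo F" and regular: "asymp_regular_via TYPE('m) F \<Sigma>"
    using assms(3) unfolding asymptotically_regular_def by blast
  have "manifold_boundary TYPE('m) (compactified F \<Sigma>) \<subseteq> sphere 0 1"
    using regular unfolding asymp_regular_via_def Let_def by blast
  then have "horizontal (manifold_boundary TYPE('m) (compactified F \<Sigma>))"
    unfolding horizontal_def
    using boundary_tangent_theta_eq_0[OF F assms(1,2,5) regular] by blast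
  then show ?thesis unfolding asymptotically_horizontal_def using F regular by blast
qed

end
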